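(* Let $H$ be a subdirect product of $H_1 \times H_2$ with projections $\pi_1\colon H \to H_1$ and $\pi_2\colon H \to H_2$. Assume that $N$ is a soluble normal subgroup of $H$ such that $H/N \cong T^\ell$, where $T$ is a nonabelian simple group and $\ell$ is a positive integer. Then there exist integers $\ell_1, \ell_2 \geq 0$ with $\ell_1 + \ell_2 \geq \ell$ such that $H_1/N\pi_1 \cong T^{\ell_1}$ and $H_2/N\pi_2 \cong T^{\ell_2}$.
   Context: $H$ is a subdirect product of $H_1\times H_2$ means $H \leq H_1\times H_2$ and both coordinate projections restricted to $H$ are surjective. $N\pi_i$ denotes the image of $N$ under $\pi_i$. *)

theory Defs
  imports "HOL-Algebra.Algebra"
begin

abbreviation power_group :: "('a, 'b) monoid_scheme \<Rightarrow> nat \<Rightarrow> (nat \<Rightarrow> 'a) monoid"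
  where "power_group T l \<equiv> product_group {..<l} (\<lambda>_. T)"

end

theory Submission
  imports Defs
begin

(* Let psi : H -> T^l be the quotient map with kernel N. For a surjection p : H -> Q one has
   Q / p(N) = H / (N ker p) = T^l / psi(ker p), and a normal subgroup of T^l (T nonabelian simple)
   is exactly the product of the factors T it contains; so Q / p(N) = T^k, where k counts the
   factors not contained in psi(ker p). The kernels of the two projections, H meet (1 x H2) and
   H meet (H1 x 1), commute elementwise, hence so do their images, and since T is nonabelian no
   factor lies in both images: the two exponents add up to at least l. *)

lemma (in group_hom) group_hom_r_coset_comp:
  assumes "S \<lhd> H"
  shows "group_hom G (H Mod S) (\<lambda>x. S #>\<^bsub>H\<^esub> h x)"
proof -
  have "(\<lambda>x. S #>\<^bsub>H\<^esub> h x) \<in> hom G (H Mod S)"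
    using Group.hom_compose[OF homh normal.r_coset_hom_Mod[OF assms]] by (simp add: o_def)
  then show ?thesis
    by (intro group_hom.intro group_hom_axioms.intro G.group_axioms normal.factorgroup_is_group assms)
qed

lemma (in group_hom) kernel_r_coset_comp:
  assumes "S \<lhd> H"
  shows "kernel G (H Mod S) (\<lambda>x. S #>\<^bsub>H\<^esub> h x) = {x \<in> carrier G. h x \<in> S}"
  using H.coset_join1 H.coset_join2 normal_imp_subgroup[OF assms]
  by (auto simp: kernel_def)

lemma (in group_hom) normal_preimage:
  assumes "S \<lhd> H"
  shows "{x \<in> carrier G. h x \<in> S} \<lhd> G"
  using group_hom.normal_kernel[OF group_hom_r_coset_comp[OF assms]]
  by (simp add: kernel_r_coset_comp[OF assms])

lemma (in group_hom) FactGroup_image_iso: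
  assumes surj: "h ` carrier G = carrier H" and M: "M \<lhd> G" and ker: "kernel G H h \<subseteq> M"
  shows "G Mod M \<cong> H Mod (h ` M)"
proof -
  interpret M: normal M G by (fact M)
  have hM: "h ` M \<lhd> H" by (rule M.surj_hom_normal_subgroup[OF group_hom_axioms surj])
  interpret c: group_hom G "H Mod h ` M" "\<lambda>x. h ` M #>\<^bsub>H\<^esub> h x"
    by (rule group_hom_r_coset_comp[OF hM])
  have "{x \<in> carrier G. h x \<in> h ` M} = M"
  proof (intro subset_antisym subsetI)
    fix x assume "x \<in> {x \<in> carrier G. h x \<in> h ` M}"
    then obtain m where x: "x \<in> carrier G" and m: "m \<in> M" "h x = h m" by auto
    then have "x \<otimes> inv m \<in> M" using ker M.subset by (auto simp: kernel_def)
    then have "x \<otimes> inv m \<otimes> m \<in> M" using m(1) by simp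
    then show "x \<in> M" using x m(1) M.subset by (simp add: G.m_assoc subset_iff)
  qed (use M.subset in auto)
  moreover have "(\<lambda>x. h ` M #>\<^bsub>H\<^esub> h x) ` carrier G = carrier (H Mod h ` M)"
    by (simp add: carrier_FactGroup flip: surj image_image)
  ultimately show ?thesis
    using c.FactGroup_iso kernel_r_coset_comp[OF hM] by simp
qed

lemma Mod_image_kernel_iso:
  assumes \<psi>: "group_hom G P \<psi>" "\<psi> ` carrier G = carrier P"
    and p: "group_hom G Q p" "p ` carrier G = carrier Q"
  shows "Q Mod (p ` kernel G P \<psi>) \<cong> P Mod (\<psi> ` kernel G Q p)"
proof -
  interpret \<psi>: group_hom G P \<psi> by (fact \<psi>)
  interpret p: group_hom G Q p by (fact p)
  \<comment> \<open>both quotients are \<open>G Mod M\<close>, where \<open>M\<close> is the product of the two kernels\<close>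
  define M where "M = {g \<in> carrier G. p g \<in> p ` kernel G P \<psi>}"
  have M: "M \<lhd> G"
    unfolding M_def
    by (intro p.normal_preimage normal.surj_hom_normal_subgroup[OF \<psi>.normal_kernel p])
  interpret M: normal M G by (fact M)
  have ker_p: "kernel G Q p \<subseteq> M" and ker_\<psi>: "kernel G P \<psi> \<subseteq> M"
    unfolding M_def kernel_def by (force intro: image_eqI[of _ _ "\<one>\<^bsub>G\<^esub>"])+
  have "p ` M = p ` kernel G P \<psi>"
    using ker_\<psi> unfolding M_def by blast
  moreover have "\<psi> ` M = \<psi> ` kernel G Q p"
  proof (intro subset_antisym image_subsetI)
    fix g assume "g \<in> M"
    then obtain n where g: "g \<in> carrier G" and n: "n \<in> carrier G" "\<psi> n = \<one>\<^bsub>P\<^esub>" "p g = p n"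
      unfolding M_def kernel_def by auto
    then have "g \<otimes>\<^bsub>G\<^esub> inv\<^bsub>G\<^esub> n \<in> kernel G Q p" by (simp add: kernel_def)
    moreover have "\<psi> (g \<otimes>\<^bsub>G\<^esub> inv\<^bsub>G\<^esub> n) = \<psi> g" using g n by simp
    ultimately show "\<psi> g \<in> \<psi> ` kernel G Q p" by (metis image_eqI)
  qed (use ker_p in blast)
  moreover have "Q Mod p ` M \<cong> G Mod M"
    by (rule group.iso_sym[OF M.factorgroup_is_group p.FactGroup_image_iso[OF p(2) M ker_p]])
  moreover have "G Mod M \<cong> P Mod \<psi> ` M"
    by (rule \<psi>.FactGroup_image_iso[OF \<psi>(2) M ker_\<psi>])
  ultimately show ?thesis by (metis iso_trans)
qed

lemma (in normal) FactGroup_iso_surj_hom: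
  assumes "G Mod H \<cong> K" and "group K"
  obtains \<psi> where "group_hom G K \<psi>" "\<psi> ` carrier G = carrier K" "kernel G K \<psi> = H"
proof -
  obtain \<phi> where \<phi>: "\<phi> \<in> iso (G Mod H) K" using assms(1) by (auto simp: is_iso_def)
  interpret \<phi>: group_hom "G Mod H" K \<phi>
    using \<phi> factorgroup_is_group assms(2) by (simp add: group_hom_def group_hom_axioms_def iso_def)
  have \<pi>: "group_hom G (G Mod H) (\<lambda>x. H #> x)"
    using r_coset_hom_Mod factorgroup_is_group by (simp add: group_hom_def group_hom_axioms_def is_group)
  have ker_\<pi>: "kernel G (G Mod H) (\<lambda>x. H #> x) = H"
    using coset_join1[OF _ _ subgroup_axioms] coset_join2[OF _ subgroup_axioms] subset
    by (auto simp: kernel_def)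
  let ?\<psi> = "\<lambda>x. \<phi> (H #> x)"
  have "group_hom G K ?\<psi>"
    using Group.hom_compose[OF group_hom.homh[OF \<pi>] \<phi>.homh] assms(2)
    by (simp add: group_hom_def group_hom_axioms_def is_group o_def)
  moreover have "?\<psi> ` carrier G = carrier K"
    using \<phi> by (simp add: iso_def bij_betw_def carrier_FactGroup flip: image_image)
  moreover have "kernel G K ?\<psi> = H"
  proof -
    have "\<phi> (H #> x) = \<one>\<^bsub>K\<^esub> \<longleftrightarrow> H #> x = H" if "x \<in> carrier G" for x
      using \<phi>.iso_iff \<phi> \<phi>.hom_one group_hom.hom_closed[OF \<pi> that] by auto
    then show ?thesis using ker_\<pi> by (auto simp: kernel_def)
  qed
  ultimately show thesis using that by blast
qed

lemma (in simple_group) central_eq_one: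
  assumes "\<not> comm_group G" and a: "a \<in> carrier G" "\<And>t. t \<in> carrier G \<Longrightarrow> a \<otimes> t = t \<otimes> a"
  shows "a = \<one>"
proof -
  let ?conj = "\<lambda>g. \<lambda>h \<in> carrier G. g \<otimes> h \<otimes> inv g"
  have central: "g \<in> kernel G (BijGroup (carrier G)) ?conj \<longleftrightarrow>
      g \<in> carrier G \<and> (\<forall>t\<in>carrier G. g \<otimes> t = t \<otimes> g)" for g
  proof -
    have "g \<otimes> t \<otimes> inv g = t \<longleftrightarrow> g \<otimes> t = t \<otimes> g" if "g \<in> carrier G" "t \<in> carrier G" for t
      using that by (metis inv_solve_right m_closed)
    then show ?thesis
      by (auto simp: kernel_def BijGroup_def fun_eq_iff restrict_def)
  qed
  have "kernel G (BijGroup (carrier G)) ?conj \<lhd> G"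
    using group_hom.normal_kernel action_by_conjugation unfolding group_action_def by blast
  then have "kernel G (BijGroup (carrier G)) ?conj = carrier G \<or> kernel G (BijGroup (carrier G)) ?conj = {\<one>}"
    by (rule no_real_normal_subgroup)
  moreover have "kernel G (BijGroup (carrier G)) ?conj \<noteq> carrier G"
    using assms(1) central by (metis group_comm_groupI)
  ultimately show ?thesis using central a by blast
qed

definition factor_inj :: "'i set \<Rightarrow> ('t, 'e) monoid_scheme \<Rightarrow> 'i \<Rightarrow> 't \<Rightarrow> 'i \<Rightarrow> 't"
  where "factor_inj I T i t = (\<lambda>j\<in>I. if j = i then t else \<one>\<^bsub>T\<^esub>)"

definition full_factors :: "'i set \<Rightarrow> ('t, 'e) monoid_scheme \<Rightarrow> ('i \<Rightarrow> 't) set \<Rightarrow> 'i set"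
  where "full_factors I T S = {i \<in> I. factor_inj I T i ` carrier T \<subseteq> S}"

definition supported_in :: "'i set \<Rightarrow> ('t, 'e) monoid_scheme \<Rightarrow> 'i set \<Rightarrow> ('i \<Rightarrow> 't) set"
  where "supported_in I T A = {f \<in> carrier (product_group I (\<lambda>_. T)). \<forall>i \<in> I - A. f i = \<one>\<^bsub>T\<^esub>}"

lemma factor_inj_hom:
  assumes "group T" "i \<in> I"
  shows "group_hom T (product_group I (\<lambda>_. T)) (factor_inj I T i)"
proof -
  interpret T: group T by (fact assms(1))
  have "factor_inj I T i \<in> hom T (product_group I (\<lambda>_. T))"
    by (rule homI) (auto simp: factor_inj_def fun_eq_iff)
  then show ?thesis
    by (simp add: group_hom_def group_hom_axioms_def T.is_group)
qed

lemma supported_in_subset: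
  assumes T: "group T" and S: "subgroup S (product_group I (\<lambda>_. T))"
    and "finite A" "A \<subseteq> full_factors I T S"
  shows "supported_in I T A \<subseteq> S"
proof -
  interpret T: group T by (fact T)
  show ?thesis
    using assms(3,4)
  proof (induction A rule: finite_induct)
    case empty
    have "supported_in I T {} = {\<one>\<^bsub>product_group I (\<lambda>_. T)\<^esub>}"
      by (auto simp: supported_in_def PiE_iff extensional_def fun_eq_iff)
    then show ?case using subgroup.one_closed[OF S] by simp
  next
    case (insert j A)
    have j: "j \<in> I" "factor_inj I T j ` carrier T \<subseteq> S"
      using insert.prems by (auto simp: full_factors_def)
    show ?case
    proof
      fix f assume f: "f \<in> supported_in I T (insert j A)"
      then have fj: "f j \<in> carrier T" using j(1) by (auto simp: supported_in_def PiE_iff)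
      have "f(j := \<one>\<^bsub>T\<^esub>) \<in> supported_in I T A"
        using f j(1) by (auto simp: supported_in_def PiE_iff extensional_def)
      then have "f(j := \<one>\<^bsub>T\<^esub>) \<in> S" using insert.IH insert.prems by blast
      moreover have "factor_inj I T j (f j) \<in> S" using j(2) fj by blast
      moreover have "f = f(j := \<one>\<^bsub>T\<^esub>) \<otimes>\<^bsub>product_group I (\<lambda>_. T)\<^esub> factor_inj I T j (f j)"
        using f fj by (auto simp: supported_in_def factor_inj_def PiE_iff extensional_def fun_eq_iff)
      ultimately show "f \<in> S" by (metis subgroup.m_closed[OF S])
    qed
  qed
qed

lemma factor_inj_commutator_mem:
  assumes T: "group T" and S: "S \<lhd> product_group I (\<lambda>_. T)"
    and f: "f \<in> S" and i: "i \<in> I" and t: "t \<in> carrier T"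
  shows "factor_inj I T i (f i \<otimes>\<^bsub>T\<^esub> t \<otimes>\<^bsub>T\<^esub> inv\<^bsub>T\<^esub> (t \<otimes>\<^bsub>T\<^esub> f i)) \<in> S"
proof -
  interpret T: group T by (fact T)
  interpret S: normal S "product_group I (\<lambda>_. T)" by (fact S)
  let ?P = "product_group I (\<lambda>_. T)" and ?d = "factor_inj I T i t"
  have fP: "f \<in> carrier ?P" using f S.subset by blast
  have dP: "?d \<in> carrier ?P" using group_hom.hom_closed[OF factor_inj_hom[OF T i] t] .
  have "f \<otimes>\<^bsub>?P\<^esub> (?d \<otimes>\<^bsub>?P\<^esub> inv\<^bsub>?P\<^esub> f \<otimes>\<^bsub>?P\<^esub> inv\<^bsub>?P\<^esub> ?d) \<in> S"
    using f dP by (intro subgroup.m_closed[OF S.subgroup_axioms] S.inv_op_closed2) auto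
  moreover have "f \<otimes>\<^bsub>?P\<^esub> (?d \<otimes>\<^bsub>?P\<^esub> inv\<^bsub>?P\<^esub> f \<otimes>\<^bsub>?P\<^esub> inv\<^bsub>?P\<^esub> ?d)
      = factor_inj I T i (f i \<otimes>\<^bsub>T\<^esub> t \<otimes>\<^bsub>T\<^esub> inv\<^bsub>T\<^esub> (t \<otimes>\<^bsub>T\<^esub> f i))"
    using fP t i by (auto simp: factor_inj_def PiE_iff fun_eq_iff T.m_assoc T.inv_mult_group)
  ultimately show ?thesis by simp
qed

lemma normal_subset_supported_in_full_factors:
  assumes T: "simple_group T" "\<not> comm_group T" and S: "S \<lhd> product_group I (\<lambda>_. T)"
  shows "S \<subseteq> supported_in I T (full_factors I T S)"
proof
  interpret T: simple_group T by (fact T(1))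
  fix f assume f: "f \<in> S"
  then have fP: "f \<in> carrier (product_group I (\<lambda>_. T))"
    using normal_imp_subgroup[OF S] subgroup.subset by blast
  have "f i = \<one>\<^bsub>T\<^esub>" if i: "i \<in> I" "i \<notin> full_factors I T S" for i
  proof -
    have fi: "f i \<in> carrier T" using fP i(1) by (auto simp: PiE_iff)
    let ?U = "{t \<in> carrier T. factor_inj I T i t \<in> S}"
    have "?U \<lhd> T" by (rule group_hom.normal_preimage[OF factor_inj_hom[OF T.is_group i(1)] S])
    moreover have "?U \<noteq> carrier T" using i by (auto simp: full_factors_def)
    ultimately have U: "?U = {\<one>\<^bsub>T\<^esub>}" using T.no_real_normal_subgroup by blast
    have "f i \<otimes>\<^bsub>T\<^esub> t = t \<otimes>\<^bsub>T\<^esub> f i" if t: "t \<in> carrier T" for t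
    proof -
      have "f i \<otimes>\<^bsub>T\<^esub> t \<otimes>\<^bsub>T\<^esub> inv\<^bsub>T\<^esub> (t \<otimes>\<^bsub>T\<^esub> f i) \<in> ?U"
        using factor_inj_commutator_mem[OF T.is_group S f i(1) t] t fi by simp
      then have "f i \<otimes>\<^bsub>T\<^esub> t \<otimes>\<^bsub>T\<^esub> inv\<^bsub>T\<^esub> (t \<otimes>\<^bsub>T\<^esub> f i) = \<one>\<^bsub>T\<^esub>"
        by (simp only: U singleton_iff)
      then show ?thesis
        using T.inv_solve_right'[of "\<one>\<^bsub>T\<^esub>" "f i \<otimes>\<^bsub>T\<^esub> t" "t \<otimes>\<^bsub>T\<^esub> f i"] t fi by simp
    qed
    then show ?thesis using T.central_eq_one[OF T(2) fi] by metis
  qed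
  then show "f \<in> supported_in I T (full_factors I T S)"
    using fP by (auto simp: supported_in_def)
qed

lemma normal_subgroup_power_eq_supported_in:
  assumes "simple_group T" "\<not> comm_group T" "finite I" and S: "S \<lhd> product_group I (\<lambda>_. T)"
  shows "S = supported_in I T (full_factors I T S)"
proof
  show "S \<subseteq> supported_in I T (full_factors I T S)"
    by (rule normal_subset_supported_in_full_factors[OF assms(1,2) S])
  have "finite (full_factors I T S)"
    using assms(3) by (auto simp: full_factors_def)
  then show "supported_in I T (full_factors I T S) \<subseteq> S"
    using supported_in_subset simple_group.axioms(1)[OF assms(1)] normal_imp_subgroup[OF S] by blast
qed

lemma FactGroup_supported_in_iso:
  fixes T :: "('t, 'e) monoid_scheme"
  assumes T: "group T" and fin: "finite (I - A)"
  shows "product_group I (\<lambda>_. T) Mod supported_in I T A \<cong> power_group T (card (I - A))"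
proof -
  interpret T: group T by (fact T)
  let ?P = "product_group I (\<lambda>_. T)" and ?n = "card (I - A)"
  obtain e where e: "bij_betw e {..<?n} (I - A)"
    using ex_bij_betw_nat_finite[OF fin] by (auto simp: atLeast0LessThan)
  then have eI: "e k \<in> I - A" if "k < ?n" for k
    using that by (auto simp: bij_betw_def)
  define \<rho> where "\<rho> f = (\<lambda>k\<in>{..<?n}. f (e k))" for f :: "_ \<Rightarrow> 't"
  have "\<rho> \<in> hom ?P (power_group T ?n)"
    using eI by (intro homI) (auto simp: \<rho>_def PiE_iff)
  then interpret \<rho>: group_hom ?P "power_group T ?n" \<rho>
    by (simp add: group_hom_def group_hom_axioms_def T.is_group)
  have "\<rho> ` carrier ?P = carrier (power_group T ?n)"
  proof (intro subset_antisym image_subsetI subsetI)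
    fix g assume g: "g \<in> carrier (power_group T ?n)"
    define f where "f = (\<lambda>i\<in>I. if i \<in> I - A then g (inv_into {..<?n} e i) else \<one>\<^bsub>T\<^esub>)"
    have "inv_into {..<?n} e i < ?n" if "i \<in> I - A" for i
      using bij_betwE[OF bij_betw_inv_into[OF e]] that by blast
    then have "f \<in> carrier ?P" using g by (auto simp: f_def PiE_iff)
    moreover have "\<rho> f = g"
      using g e eI by (auto simp: \<rho>_def f_def fun_eq_iff PiE_iff extensional_def bij_betw_def inv_into_f_f)
    ultimately show "g \<in> \<rho> ` carrier ?P" by blast
  qed (rule \<rho>.hom_closed)
  moreover have "kernel ?P (power_group T ?n) \<rho> = supported_in I T A"
  proof -
    have "(\<forall>k<?n. f (e k) = \<one>\<^bsub>T\<^esub>) \<longleftrightarrow> (\<forall>i\<in>e ` {..<?n}. f i = \<one>\<^bsub>T\<^esub>)" for f :: "_ \<Rightarrow> 't"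
      by auto
    then have "(\<forall>k<?n. f (e k) = \<one>\<^bsub>T\<^esub>) \<longleftrightarrow> (\<forall>i\<in>I - A. f i = \<one>\<^bsub>T\<^esub>)" for f :: "_ \<Rightarrow> 't"
      using bij_betw_imp_surj_on[OF e] by simp
    then show ?thesis
      by (auto simp: kernel_def supported_in_def \<rho>_def fun_eq_iff)
  qed
  ultimately show ?thesis
    using \<rho>.FactGroup_iso by simp
qed

lemma power_group_FactGroup_iso:
  assumes "simple_group T" "\<not> comm_group T" "finite I" and S: "S \<lhd> product_group I (\<lambda>_. T)"
  shows "product_group I (\<lambda>_. T) Mod S \<cong> power_group T (card (I - full_factors I T S))"
  using FactGroup_supported_in_iso[OF simple_group.axioms(1)[OF assms(1)]]
    normal_subgroup_power_eq_supported_in[OF assms] assms(3)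
  by (metis finite_Diff)

lemma full_factors_disjoint:
  assumes "group T" "\<not> comm_group T"
    and comm: "\<And>x y. x \<in> S1 \<Longrightarrow> y \<in> S2 \<Longrightarrow>
      x \<otimes>\<^bsub>product_group I (\<lambda>_. T)\<^esub> y = y \<otimes>\<^bsub>product_group I (\<lambda>_. T)\<^esub> x"
  shows "full_factors I T S1 \<inter> full_factors I T S2 = {}"
proof (rule ccontr)
  interpret T: group T by (fact assms(1))
  assume "full_factors I T S1 \<inter> full_factors I T S2 \<noteq> {}"
  then obtain i where i: "i \<in> I" "factor_inj I T i ` carrier T \<subseteq> S1" "factor_inj I T i ` carrier T \<subseteq> S2"
    by (auto simp: full_factors_def)
  have "a \<otimes>\<^bsub>T\<^esub> b = b \<otimes>\<^bsub>T\<^esub> a" if "a \<in> carrier T" "b \<in> carrier T" for a b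
    using fun_cong[OF comm[of "factor_inj I T i a" "factor_inj I T i b"], of i] i that
    by (auto simp: factor_inj_def)
  then show False using assms(2) T.group_comm_groupI by blast
qed

lemma FactGroup_image_kernel_power_iso:
  assumes T: "simple_group T" "\<not> comm_group T" and I: "finite I"
    and \<psi>: "group_hom G (product_group I (\<lambda>_. T)) \<psi>" "\<psi> ` carrier G = carrier (product_group I (\<lambda>_. T))"
    and p: "group_hom G Q p" "p ` carrier G = carrier Q"
  shows "Q Mod (p ` kernel G (product_group I (\<lambda>_. T)) \<psi>)
           \<cong> power_group T (card (I - full_factors I T (\<psi> ` kernel G Q p)))"
proof -
  have "Q Mod (p ` kernel G (product_group I (\<lambda>_. T)) \<psi>)
      \<cong> product_group I (\<lambda>_. T) Mod (\<psi> ` kernel G Q p)"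
    by (rule Mod_image_kernel_iso[OF \<psi> p])
  also have "\<dots> \<cong> power_group T (card (I - full_factors I T (\<psi> ` kernel G Q p)))"
    by (intro power_group_FactGroup_iso[OF T I]
        normal.surj_hom_normal_subgroup[OF group_hom.normal_kernel[OF p(1)] \<psi>])
  finally show ?thesis .
qed

lemma full_factors_image_disjoint:
  assumes T: "group T" "\<not> comm_group T" and \<psi>: "group_hom G (product_group I (\<lambda>_. T)) \<psi>"
    and S: "S1 \<subseteq> carrier G" "S2 \<subseteq> carrier G"
    and comm: "\<And>x y. x \<in> S1 \<Longrightarrow> y \<in> S2 \<Longrightarrow> x \<otimes>\<^bsub>G\<^esub> y = y \<otimes>\<^bsub>G\<^esub> x"
  shows "full_factors I T (\<psi> ` S1) \<inter> full_factors I T (\<psi> ` S2) = {}"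
proof (rule full_factors_disjoint[OF T], clarify)
  interpret \<psi>: group_hom G "product_group I (\<lambda>_. T)" \<psi> by (fact \<psi>)
  fix x y assume xy: "x \<in> S1" "y \<in> S2"
  then show "\<psi> x \<otimes>\<^bsub>product_group I (\<lambda>_. T)\<^esub> \<psi> y = \<psi> y \<otimes>\<^bsub>product_group I (\<lambda>_. T)\<^esub> \<psi> x"
    using S comm[OF xy] by (metis \<psi>.hom_mult subsetD)
qed

lemma subgroup_DirProd_projection_homs:
  assumes "group H1" "group H2" "subgroup H (H1 \<times>\<times> H2)"
  shows "group_hom ((H1 \<times>\<times> H2)\<lparr>carrier := H\<rparr>) H1 fst"
    and "group_hom ((H1 \<times>\<times> H2)\<lparr>carrier := H\<rparr>) H2 snd"
proof -
  have G: "group ((H1 \<times>\<times> H2)\<lparr>carrier := H\<rparr>)"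
    by (rule group.subgroup_imp_group[OF DirProd_group[OF assms(1,2)] assms(3)])
  have "fst \<in> hom ((H1 \<times>\<times> H2)\<lparr>carrier := H\<rparr>) H1" "snd \<in> hom ((H1 \<times>\<times> H2)\<lparr>carrier := H\<rparr>) H2"
    using subgroup.subset[OF assms(3)] by (auto intro!: homI simp: mult_DirProd')
  then show "group_hom ((H1 \<times>\<times> H2)\<lparr>carrier := H\<rparr>) H1 fst"
    and "group_hom ((H1 \<times>\<times> H2)\<lparr>carrier := H\<rparr>) H2 snd"
    using G assms(1,2) by (simp_all add: group_hom_def group_hom_axioms_def)
qed

lemma subgroup_DirProd_kernels_commute:
  assumes "group H1" "group H2" "subgroup H (H1 \<times>\<times> H2)"
    and "x \<in> kernel ((H1 \<times>\<times> H2)\<lparr>carrier := H\<rparr>) H1 fst"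
    and "y \<in> kernel ((H1 \<times>\<times> H2)\<lparr>carrier := H\<rparr>) H2 snd"
  shows "x \<otimes>\<^bsub>(H1 \<times>\<times> H2)\<lparr>carrier := H\<rparr>\<^esub> y = y \<otimes>\<^bsub>(H1 \<times>\<times> H2)\<lparr>carrier := H\<rparr>\<^esub> x"
  using assms subgroup.subset[OF assms(3)]
  by (auto simp: kernel_def mult_DirProd' group.is_monoid)

theorem lemma2p5:
  fixes H1 :: "('a, 'c) monoid_scheme" and H2 :: "('b, 'd) monoid_scheme"
    and T :: "('t, 'e) monoid_scheme"
    and H N :: "('a \<times> 'b) set" and l :: nat
  assumes "group H1" and "group H2"
    and "subgroup H (H1 \<times>\<times> H2)"
    and "fst ` H = carrier H1" and "snd ` H = carrier H2"
    and "N \<lhd> ((H1 \<times>\<times> H2)\<lparr>carrier := H\<rparr>)"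
    and "solvable ((H1 \<times>\<times> H2)\<lparr>carrier := N\<rparr>)"
    and "simple_group T" and "\<not> comm_group T"
    and "l > 0"
    and "((H1 \<times>\<times> H2)\<lparr>carrier := H\<rparr>) Mod N \<cong> power_group T l"
  shows "\<exists>l1 l2 :: nat. l1 + l2 \<ge> l
           \<and> H1 Mod (fst ` N) \<cong> power_group T l1
           \<and> H2 Mod (snd ` N) \<cong> power_group T l2"
proof -
  let ?G = "(H1 \<times>\<times> H2)\<lparr>carrier := H\<rparr>" and ?I = "{..<l}"
  have T: "group T" using assms(8) by (rule simple_group.axioms(1))
  obtain \<psi> where \<psi>: "group_hom ?G (power_group T l) \<psi>" "\<psi> ` carrier ?G = carrier (power_group T l)"
      and N: "kernel ?G (power_group T l) \<psi> = N"
    using normal.FactGroup_iso_surj_hom[OF assms(6,11)] T by auto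
  note projections = subgroup_DirProd_projection_homs[OF assms(1-3)]
  let ?A1 = "full_factors ?I T (\<psi> ` kernel ?G H1 fst)"
    and ?A2 = "full_factors ?I T (\<psi> ` kernel ?G H2 snd)"
  have iso1: "H1 Mod (fst ` N) \<cong> power_group T (card (?I - ?A1))"
    using FactGroup_image_kernel_power_iso[OF assms(8,9) finite_lessThan \<psi> projections(1)] assms(4) N
    by simp
  have iso2: "H2 Mod (snd ` N) \<cong> power_group T (card (?I - ?A2))"
    using FactGroup_image_kernel_power_iso[OF assms(8,9) finite_lessThan \<psi> projections(2)] assms(5) N
    by simp
  have "?A1 \<inter> ?A2 = {}"
    by (intro full_factors_image_disjoint[OF T assms(9) \<psi>(1)]
        subgroup_DirProd_kernels_commute[OF assms(1-3)]) (auto simp: kernel_def)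
  then have "card ?I \<le> card ((?I - ?A1) \<union> (?I - ?A2))"
    by (intro card_mono) auto
  also have "\<dots> \<le> card (?I - ?A1) + card (?I - ?A2)"
    by (rule card_Un_le)
  finally show ?thesis using iso1 iso2 by auto
qed

end
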